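(* Assume $Q[m_{0,0}+m_{0,0}^{-1}]<\infty$. Then either $P^{\mathbf q}(\text{survival})>0$ for $Q$-a.e. $\mathbf q$, or $P^{\mathbf q}(\text{survival})=0$ for $Q$-a.e. $\mathbf q$.
   Context: BRWRE on $\mathbb Z^d$ ($d\ge 1$), with $\mathbb N=\{0,1,\dots\}$ and $\mathbb N^*=\{1,2,\dots\}$. An environment is $\mathbf q=(q_{t,x})_{(t,x)\in\mathbb N\times\mathbb Z^d}$, a family of probability measures on $\mathbb N$, i.i.d. under $Q$. Let $m_{t,x}=\sum_kk\,q_{t,x}(k)$. Given $\mathbf q$, the branching random walk with law $P^{\mathbf q}$ starts with one particle at the origin at time $0$. A particle at site $x$ at time $t$ jumps at time $t+1$ to a uniformly chosen one of the $2d$ nearest neighbours of $x$ and there dies, leaving $k$ new particles with probability $q_{t,x}(k)$; all jumps and offspring numbers are independent. $B_t$ denotes the set of particles at time $t$, and $\{\text{survival}\}=\{B_t\ne\emptyset\ \forall t\ge0\}$. *)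

theory Defs
  imports "HOL-Analysis.Analysis" "HOL-Probability.Probability"
begin

text \<open>Sites of the lattice Z^d are vectors int^'d, with 'd a finite (nonempty) index type,
  so d = CARD('d) >= 1.  A probability measure on N is represented by its weight
  function N -> R; an environment assigns one to every space-time point (t,x).\<close>

type_synonym 'd env = "nat \<times> (int ^ 'd) \<Rightarrow> (nat \<Rightarrow> real)"

definition nbrs :: "int ^ ('d::finite) \<Rightarrow> (int ^ 'd) set" where
  "nbrs x = {x + axis i 1 | i. True} \<union> {x + axis i (-1) | i. True}"

definition qpmf :: "('d::finite) env \<Rightarrow> nat \<Rightarrow> int ^ 'd \<Rightarrow> nat pmf" where
  "qpmf q t x = embed_pmf (q (t, x))"

definition mean :: "(nat \<Rightarrow> real) \<Rightarrow> ennreal" where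
  "mean p = (\<integral>\<^sup>+ k. ennreal (real k * p k) \<partial>count_space UNIV)"

definition children :: "('d::finite) env \<Rightarrow> nat \<Rightarrow> int ^ 'd \<Rightarrow> (int ^ 'd) list pmf" where
  "children q t x =
     bind_pmf (pmf_of_set (nbrs x)) (\<lambda>y.
     bind_pmf (qpmf q t x) (\<lambda>k. return_pmf (replicate k y)))"

definition step :: "('d::finite) env \<Rightarrow> nat \<Rightarrow> (int ^ 'd) list \<Rightarrow> (int ^ 'd) list pmf" where
  "step q t xs =
     map_pmf (\<lambda>f. concat (map f [0..<length xs]))
       (Pi_pmf {..<length xs} [] (\<lambda>i. children q t (xs ! i)))"

text \<open>Law of the population B_t (list of positions of the particles) under P^q.\<close>
fun pop :: "('d::finite) env \<Rightarrow> nat \<Rightarrow> (int ^ 'd) list pmf" where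
  "pop q 0 = return_pmf [0]"
| "pop q (Suc t) = bind_pmf (pop q t) (step q t)"

text \<open>P^q(survival) = P^q(B_t \<noteq> {} for all t); since the empty population is absorbing,
  the events {B_t \<noteq> {}} decrease and this is the infimum of their probabilities.\<close>
definition surv_prob :: "('d::finite) env \<Rightarrow> real" where
  "surv_prob q = (INF t. measure_pmf.prob (pop q t) {xs. xs \<noteq> []})"

end

theory Submission
  imports Defs
begin

text \<open>Let \<open>S(s,z)\<close> be the survival probability of the branching random walk started by one
  particle at site \<open>z\<close> at time \<open>s\<close>. Conditioning on the first generation and comparing the
  generating function \<open>G\<close> of \<open>q(s,z)\<close> with its tangent and chord at 1, i.e.
  \<open>q(s,z)(k) (1 - x) \<le> 1 - G(x) \<le> m(s,z) (1 - x)\<close>, gives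
  \<open>q(s,z)(k) S(s+1,y) / 2d \<le> S(s,z) \<le> m(s,z) \<Sum>\<^sub>y S(s+1,y) / 2d\<close>
  for every \<open>k \<ge> 1\<close> and neighbour \<open>y\<close> of \<open>z\<close>. The moment hypothesis makes
  \<open>0 < m < \<infinity>\<close> at all space-time points almost surely, and then \<open>S(s,z) > 0\<close> iff
  \<open>S(s+1,y) > 0\<close> for some neighbour \<open>y\<close>. Hence \<open>S(0,0) > 0\<close> iff for every \<open>T\<close>, or
  equivalently for infinitely many \<open>T\<close>, some site \<open>y\<close> reachable in \<open>T\<close> steps has
  \<open>S(T,y) > 0\<close>. The latter event depends only on the environment after any fixed time, so
  Kolmogorov's zero-one law gives it probability 0 or 1.\<close>

definition proper_env :: "('d::finite) env \<Rightarrow> bool" where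
  "proper_env q \<longleftrightarrow> (\<forall>s z. (\<forall>k. 0 \<le> q (s,z) k) \<and> q (s,z) sums 1)"

definition regular_env :: "('d::finite) env \<Rightarrow> bool" where
  "regular_env q \<longleftrightarrow> proper_env q \<and> (\<forall>s z. 0 < mean (q (s,z)) \<and> mean (q (s,z)) < \<infinity>)"

fun pop_from :: "('d::finite) env \<Rightarrow> nat \<Rightarrow> (int ^ 'd) list \<Rightarrow> nat \<Rightarrow> (int ^ 'd) list pmf" where
  "pop_from q s zs 0 = return_pmf zs"
| "pop_from q s zs (Suc t) = bind_pmf (pop_from q s zs t) (step q (s + t))"

lemma pop_eq_pop_from: "pop q t = pop_from q 0 [0] t"
  by (induction t) auto

lemma pop_from_Suc_first_step:
  "pop_from q s zs (Suc t) = bind_pmf (step q s zs) (\<lambda>ws. pop_from q (Suc s) ws t)"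
proof (induction t)
  case 0
  show ?case by (simp add: bind_return_pmf bind_return_pmf')
next
  case (Suc t)
  show ?case
    by (subst pop_from.simps, subst Suc) (simp add: bind_assoc_pmf)
qed

lemma finite_nbrs: "finite (nbrs (x :: int ^ ('d::finite)))"
proof -
  have "nbrs x = range (\<lambda>i. x + axis i 1) \<union> range (\<lambda>i. x + axis i (-1))"
    unfolding nbrs_def by auto
  then show ?thesis by simp
qed

lemma nbrs_nonempty: "nbrs (x :: int ^ ('d::finite)) \<noteq> {}"
  unfolding nbrs_def by auto

lemma card_nbrs_pos: "0 < card (nbrs (x :: int ^ ('d::finite)))"
  using finite_nbrs[of x] nbrs_nonempty[of x] by (simp add: card_gt_0_iff)

lemma nn_integral_embed_pmf_nat:
  assumes "\<And>k. 0 \<le> p k" "p sums 1"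
  shows "(\<integral>\<^sup>+k. f k \<partial>measure_pmf (embed_pmf p)) = (\<Sum>k. ennreal (p k) * f k)"
proof -
  have "(\<integral>\<^sup>+k. p k \<partial>count_space UNIV) = 1"
    by (simp add: nn_integral_count_space_nat suminf_ennreal_eq[OF assms])
  then have "pmf (embed_pmf p) k = p k" for k
    by (rule pmf_embed_pmf[OF assms(1)])
  then show ?thesis
    by (simp add: nn_integral_measure_pmf nn_integral_count_space_nat)
qed

lemma prod_list_map_concat:
  "prod_list (map g (concat xss)) = prod_list (map (\<lambda>xs. prod_list (map g xs)) xss)"
  by (induction xss) auto

lemma prod_list_map_upt: "prod_list (map h [0..<n]) = (\<Prod>i<n. h i)"
  by (induction n) simp_all

lemma prod_list_map_conv_prod_nth: "prod_list (map h zs) = (\<Prod>i<length zs. h (zs ! i))"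
proof -
  have "map h zs = map (\<lambda>i. h (zs ! i)) [0..<length zs]"
    by (rule nth_equalityI) simp_all
  then show ?thesis
    by (subst (1) \<open>map h zs = _\<close>) (rule prod_list_map_upt)
qed

lemma nn_integral_children_prod_list:
  "(\<integral>\<^sup>+ws. prod_list (map g ws) \<partial>measure_pmf (children q s z)) =
     (\<Sum>y\<in>nbrs z. \<integral>\<^sup>+k. g y ^ k \<partial>measure_pmf (qpmf q s z)) / of_nat (card (nbrs z))"
  unfolding children_def by (simp add: nn_integral_pmf_of_set finite_nbrs nbrs_nonempty)

lemma nn_integral_step_prod_list:
  "(\<integral>\<^sup>+ws. prod_list (map g ws) \<partial>measure_pmf (step q s zs)) =
     prod_list (map (\<lambda>z. \<integral>\<^sup>+ws. prod_list (map g ws) \<partial>measure_pmf (children q s z)) zs)"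
proof -
  let ?F = "Pi_pmf {..<length zs} [] (\<lambda>i. children q s (zs ! i))"
  have "(\<integral>\<^sup>+ws. prod_list (map g ws) \<partial>measure_pmf (step q s zs)) =
      (\<integral>\<^sup>+f. (\<Prod>i<length zs. prod_list (map g (f i))) \<partial>measure_pmf ?F)"
    unfolding step_def
    by (simp add: prod_list_map_concat map_map o_def prod_list_map_upt)
  also have "\<dots> = (\<Prod>i<length zs. \<integral>\<^sup>+ws. prod_list (map g ws) \<partial>measure_pmf (children q s (zs ! i)))"
    by (rule nn_integral_prod_Pi_pmf) simp
  also have "\<dots> = prod_list (map (\<lambda>z. \<integral>\<^sup>+ws. prod_list (map g ws) \<partial>measure_pmf (children q s z)) zs)"
    by (rule prod_list_map_conv_prod_nth[symmetric])
  finally show ?thesis .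
qed

text \<open>By \<open>ennreal_pmf_pop_from_Nil\<close> this is the probability that one particle at \<open>(s, z)\<close>
  has no descendants at time \<open>s + t\<close>; unlike that pmf, it is an explicit function of finitely
  many coordinates of \<open>q\<close>, hence measurable in the environment.\<close>
fun extinction_ennreal :: "('d::finite) env \<Rightarrow> nat \<Rightarrow> int ^ 'd \<Rightarrow> nat \<Rightarrow> ennreal" where
  "extinction_ennreal q s z 0 = 0"
| "extinction_ennreal q s z (Suc t) =
     (\<Sum>y\<in>nbrs z. \<Sum>k. ennreal (q (s,z) k) * extinction_ennreal q (Suc s) y t ^ k) / of_nat (card (nbrs z))"

lemma ennreal_pmf_pop_from_Nil:
  assumes "proper_env q"
  shows "ennreal (pmf (pop_from q s zs t) []) = (\<Prod>z\<leftarrow>zs. extinction_ennreal q s z t)"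
proof (induction t arbitrary: s zs)
  case 0
  then show ?case by (cases zs) auto
next
  case (Suc t)
  have q: "\<And>k. 0 \<le> q (s,z) k" "q (s,z) sums 1" for z
    using assms unfolding proper_env_def by auto
  have children: "(\<integral>\<^sup>+ws. (\<Prod>w\<leftarrow>ws. extinction_ennreal q (Suc s) w t) \<partial>measure_pmf (children q s z))
      = extinction_ennreal q s z (Suc t)" for z
    by (simp add: nn_integral_children_prod_list qpmf_def nn_integral_embed_pmf_nat[OF q])
  have "ennreal (pmf (pop_from q s zs (Suc t)) []) =
      (\<integral>\<^sup>+ws. ennreal (pmf (pop_from q (Suc s) ws t) []) \<partial>measure_pmf (step q s zs))"
    unfolding pop_from_Suc_first_step by (rule ennreal_pmf_bind)
  also have "\<dots> = (\<Prod>z\<leftarrow>zs. extinction_ennreal q s z (Suc t))"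
    by (simp only: Suc nn_integral_step_prod_list children)
  finally show ?case .
qed

definition extinction :: "('d::finite) env \<Rightarrow> nat \<Rightarrow> int ^ 'd \<Rightarrow> nat \<Rightarrow> real" where
  "extinction q s z t = enn2real (extinction_ennreal q s z t)"

lemma extinction_ennreal_eq_pmf:
  "proper_env q \<Longrightarrow> extinction_ennreal q s z t = ennreal (pmf (pop_from q s [z] t) [])"
  using ennreal_pmf_pop_from_Nil[of q s "[z]" t] by simp

lemma extinction_eq_pmf: "proper_env q \<Longrightarrow> extinction q s z t = pmf (pop_from q s [z] t) []"
  unfolding extinction_def by (simp add: extinction_ennreal_eq_pmf)

lemma extinction_ennreal_eq_extinction:
  "proper_env q \<Longrightarrow> extinction_ennreal q s z t = ennreal (extinction q s z t)"
  by (simp add: extinction_ennreal_eq_pmf extinction_eq_pmf)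

lemma extinction_nonneg: "0 \<le> extinction q s z t"
  unfolding extinction_def by simp

lemma extinction_le_1: "proper_env q \<Longrightarrow> extinction q s z t \<le> 1"
  by (simp add: extinction_eq_pmf pmf_le_1)

lemma extinction_0 [simp]: "extinction q s z 0 = 0"
  unfolding extinction_def by simp

lemma extinction_ennreal_Suc_mono: "extinction_ennreal q s z t \<le> extinction_ennreal q s z (Suc t)"
proof (induction t arbitrary: s z)
  case 0
  then show ?case by simp
next
  case (Suc t)
  show ?case
    unfolding extinction_ennreal.simps(2)[of q s z]
    by (intro divide_right_mono_ennreal sum_mono suminf_le mult_left_mono power_mono Suc.IH)
      (auto intro: summableI)
qed

lemma extinction_mono:
  assumes "proper_env q" "t \<le> t'"
  shows "extinction q s z t \<le> extinction q s z t'"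
  unfolding extinction_def
  using lift_Suc_mono_le[of "extinction_ennreal q s z", OF extinction_ennreal_Suc_mono assms(2)]
  by (rule enn2real_mono) (simp add: extinction_ennreal_eq_extinction[OF assms(1)])

definition pgf :: "(nat \<Rightarrow> real) \<Rightarrow> real \<Rightarrow> real" where
  "pgf p x = (\<Sum>k. p k * x ^ k)"

locale prob_vector =
  fixes p :: "nat \<Rightarrow> real"
  assumes nonneg: "\<And>k. 0 \<le> p k" and sums_1: "p sums 1"
begin

lemma summable: "summable p"
  using sums_1 by (rule sums_summable)

lemma le_1: "p k \<le> 1"
  using sum_le_suminf[OF summable, of "{k}"] nonneg sums_unique[OF sums_1] by simp

lemma summable_pgf:
  assumes "0 \<le> x" "x \<le> 1"
  shows "summable (\<lambda>k. p k * x ^ k)"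
proof (rule summable_comparison_test[OF _ summable])
  show "\<exists>N. \<forall>n\<ge>N. norm (p n * x ^ n) \<le> p n"
    using assms nonneg by (auto simp: abs_mult intro!: mult_left_le power_le_one)
qed

lemma sums_pgf: "0 \<le> x \<Longrightarrow> x \<le> 1 \<Longrightarrow> (\<lambda>k. p k * x ^ k) sums pgf p x"
  unfolding pgf_def by (intro summable_sums summable_pgf)

lemma pgf_nonneg: "0 \<le> x \<Longrightarrow> x \<le> 1 \<Longrightarrow> 0 \<le> pgf p x"
  unfolding pgf_def using nonneg by (intro suminf_nonneg summable_pgf) auto

lemma pgf_le_1:
  assumes "0 \<le> x" "x \<le> 1"
  shows "pgf p x \<le> 1"
proof -
  have "pgf p x \<le> suminf p"
    unfolding pgf_def using assms nonneg
    by (intro suminf_le summable_pgf summable) (auto intro!: mult_left_le power_le_one)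
  then show ?thesis
    using sums_1 by (simp add: sums_unique[symmetric])
qed

lemma offspring_le_one_minus_pgf:
  assumes "0 \<le> x" "x \<le> 1" "1 \<le> k"
  shows "p k * (1 - x) \<le> 1 - pgf p x"
proof -
  define d where "d = (\<lambda>j. if j = k then p k * (1 - x) else 0)"
  have d: "d sums (p k * (1 - x))"
    unfolding d_def using sums_single[of k "\<lambda>_. p k * (1 - x)"] by simp
  have "p j * x ^ j \<le> p j - d j" for j
  proof (cases "j = k")
    case True
    have "x ^ k \<le> x"
      using assms power_decreasing[of 1 k x] by simp
    then have "p k * x ^ k \<le> p k * x"
      using nonneg by (rule mult_left_mono)
    then show ?thesis
      using True by (simp add: d_def algebra_simps)
  next
    case False
    then show ?thesis
      using assms nonneg by (simp add: d_def mult_left_le power_le_one)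
  qed
  then have "pgf p x \<le> 1 - p k * (1 - x)"
    using sums_le[OF _ sums_pgf[OF assms(1,2)] sums_diff[OF sums_1 d]] by blast
  then show ?thesis by simp
qed

lemma one_minus_pgf_le_mean:
  assumes "0 \<le> x" "x \<le> 1" "summable (\<lambda>k. real k * p k)"
  shows "1 - pgf p x \<le> (\<Sum>k. real k * p k) * (1 - x)"
proof -
  have "p k - p k * x ^ k \<le> real k * p k * (1 - x)" for k
  proof -
    have "1 - x ^ k \<le> real k * (1 - x)"
      using Bernoulli_inequality[of "x - 1" k] assms(1) by (simp add: algebra_simps)
    then have "p k * (1 - x ^ k) \<le> p k * (real k * (1 - x))"
      using nonneg by (rule mult_left_mono)
    then show ?thesis
      by (simp add: algebra_simps)
  qed
  then show ?thesis
    using sums_le[OF _ sums_diff[OF sums_1 sums_pgf[OF assms(1,2)]]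
        sums_mult2[OF summable_sums[OF assms(3)]]] by blast
qed

end

lemma prob_vector_env: "proper_env q \<Longrightarrow> prob_vector (q (s,z))"
  unfolding proper_env_def prob_vector_def by auto

lemma extinction_Suc:
  assumes "proper_env q"
  shows "extinction q s z (Suc t) =
    (\<Sum>y\<in>nbrs z. pgf (q (s,z)) (extinction q (Suc s) y t)) / real (card (nbrs z))"
proof -
  interpret prob_vector "q (s,z)"
    using assms by (rule prob_vector_env)
  let ?x = "\<lambda>y. extinction q (Suc s) y t"
  have x: "0 \<le> ?x y" "?x y \<le> 1" for y
    using extinction_nonneg extinction_le_1[OF assms] by auto
  have series_eq_pgf: "(\<Sum>k. ennreal (q (s,z) k) * extinction_ennreal q (Suc s) y t ^ k) =
      ennreal (pgf (q (s,z)) (?x y))" for y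
  proof -
    have "(\<Sum>k. ennreal (q (s,z) k) * extinction_ennreal q (Suc s) y t ^ k) =
        (\<Sum>k. ennreal (q (s,z) k * ?x y ^ k))"
      using nonneg x by (simp add: extinction_ennreal_eq_extinction[OF assms] ennreal_power ennreal_mult)
    also have "\<dots> = ennreal (pgf (q (s,z)) (?x y))"
      using nonneg x by (intro suminf_ennreal_eq sums_pgf) auto
    finally show ?thesis .
  qed
  have pgf_x_nonneg: "0 \<le> pgf (q (s,z)) (?x y)" for y
    using x pgf_nonneg by auto
  have "extinction_ennreal q s z (Suc t) =
      ennreal ((\<Sum>y\<in>nbrs z. pgf (q (s,z)) (?x y)) / real (card (nbrs z)))"
    using card_nbrs_pos[of z] pgf_x_nonneg
    by (simp add: series_eq_pgf sum_ennreal ennreal_of_nat_eq_real_of_nat divide_ennreal sum_nonneg)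
  then show ?thesis
    unfolding extinction_def[of q s z "Suc t"] by (simp add: sum_nonneg pgf_x_nonneg)
qed

lemma one_minus_extinction_Suc:
  assumes "proper_env q"
  shows "1 - extinction q s z (Suc t) =
    (\<Sum>y\<in>nbrs z. 1 - pgf (q (s,z)) (extinction q (Suc s) y t)) / real (card (nbrs z))"
  using card_nbrs_pos[of z]
  by (simp add: extinction_Suc[OF assms] sum_subtractf field_simps)

definition survival :: "('d::finite) env \<Rightarrow> nat \<Rightarrow> int ^ 'd \<Rightarrow> real" where
  "survival q s z = (INF t. 1 - extinction q s z t)"

lemma bdd_below_one_minus_extinction:
  "proper_env q \<Longrightarrow> bdd_below (range (\<lambda>t. 1 - extinction q s z t))"
  using extinction_le_1 by (intro bdd_belowI[of _ 0]) fastforce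

lemma survival_le: "proper_env q \<Longrightarrow> survival q s z \<le> 1 - extinction q s z t"
  unfolding survival_def by (intro cINF_lower bdd_below_one_minus_extinction) auto

lemma survival_le_1: "proper_env q \<Longrightarrow> survival q s z \<le> 1"
  using survival_le[of q s z 0] by simp

lemma survival_nonneg: "proper_env q \<Longrightarrow> 0 \<le> survival q s z"
  unfolding survival_def using extinction_le_1 by (intro cINF_greatest) auto

lemma one_minus_extinction_tendsto_survival:
  assumes "proper_env q"
  shows "(\<lambda>t. 1 - extinction q s z t) \<longlonglongrightarrow> survival q s z"
  unfolding survival_def
  by (intro LIMSEQ_decseq_INF bdd_below_one_minus_extinction[OF assms])
    (simp add: decseq_def extinction_mono[OF assms])

lemma surv_prob_eq_survival:
  assumes "proper_env q"
  shows "surv_prob q = survival q 0 0"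
proof -
  have "measure_pmf.prob (pop q t) {xs. xs \<noteq> []} = 1 - extinction q 0 0 t" for t
  proof -
    have "{xs. xs \<noteq> []} = space (measure_pmf (pop q t)) - {[]}"
      by auto
    then have "measure_pmf.prob (pop q t) {xs. xs \<noteq> []} = 1 - measure_pmf.prob (pop q t) {[]}"
      by (simp only:) (rule measure_pmf.prob_compl, simp)
    then show ?thesis
      by (simp add: measure_pmf_single pop_eq_pop_from extinction_eq_pmf[OF assms])
  qed
  then show ?thesis
    unfolding surv_prob_def survival_def by simp
qed

lemma survival_ge_offspring:
  assumes q: "proper_env q" and "y \<in> nbrs z" "1 \<le> k"
  shows "q (s,z) k * survival q (Suc s) y / real (card (nbrs z)) \<le> survival q s z"
proof -
  interpret prob_vector "q (s,z)"
    using q by (rule prob_vector_env)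
  let ?c = "real (card (nbrs z))"
  have c: "1 \<le> ?c" "0 < ?c"
    using card_nbrs_pos[of z] by simp_all
  have "q (s,z) k * survival q (Suc s) y / ?c \<le> 1 - extinction q s z t" for t
  proof (cases t)
    case 0
    have "q (s,z) k * survival q (Suc s) y \<le> 1 * 1"
      using le_1 nonneg survival_le_1[OF q] survival_nonneg[OF q] by (intro mult_mono) auto
    then show ?thesis
      using 0 c by (simp add: divide_le_eq)
  next
    case (Suc t')
    let ?x = "\<lambda>y. extinction q (Suc s) y t'"
    have x: "0 \<le> ?x y" "?x y \<le> 1" for y
      using extinction_nonneg extinction_le_1[OF q] by auto
    have "q (s,z) k * survival q (Suc s) y \<le> q (s,z) k * (1 - ?x y)"
      using survival_le[OF q] nonneg by (rule mult_left_mono)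
    also have "\<dots> \<le> 1 - pgf (q (s,z)) (?x y)"
      using x assms(3) by (rule offspring_le_one_minus_pgf)
    also have "\<dots> \<le> (\<Sum>y\<in>nbrs z. 1 - pgf (q (s,z)) (?x y))"
      using assms(2) finite_nbrs pgf_le_1 x by (intro member_le_sum) auto
    finally show ?thesis
      unfolding Suc one_minus_extinction_Suc[OF q] using c by (simp add: divide_right_mono)
  qed
  then show ?thesis
    unfolding survival_def by (intro cINF_greatest) auto
qed

lemma survival_le_mean:
  assumes q: "proper_env q" and m: "summable (\<lambda>k. real k * q (s,z) k)"
  shows "survival q s z \<le>
    (\<Sum>k. real k * q (s,z) k) * (\<Sum>y\<in>nbrs z. survival q (Suc s) y) / real (card (nbrs z))"
proof -
  interpret prob_vector "q (s,z)"
    using q by (rule prob_vector_env)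
  let ?m = "\<Sum>k. real k * q (s,z) k" and ?c = "real (card (nbrs z))"
  have "?m \<ge> 0"
    using nonneg by (intro suminf_nonneg m) auto
  then have "1 - extinction q s z (Suc t) \<le> ?m * (\<Sum>y\<in>nbrs z. 1 - extinction q (Suc s) y t) / ?c" for t
    unfolding one_minus_extinction_Suc[OF q] sum_distrib_left
    using extinction_nonneg extinction_le_1[OF q] card_nbrs_pos[of z]
    by (intro divide_right_mono sum_mono one_minus_pgf_le_mean m) auto
  moreover have "(\<lambda>t. 1 - extinction q s z (Suc t)) \<longlonglongrightarrow> survival q s z"
    using one_minus_extinction_tendsto_survival[OF q] by (rule LIMSEQ_Suc)
  moreover have "(\<lambda>t. ?m * (\<Sum>y\<in>nbrs z. 1 - extinction q (Suc s) y t) / ?c)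
      \<longlonglongrightarrow> ?m * (\<Sum>y\<in>nbrs z. survival q (Suc s) y) / ?c"
    using card_nbrs_pos[of z] by (intro tendsto_intros one_minus_extinction_tendsto_survival[OF q]) simp
  ultimately show ?thesis
    by (intro LIMSEQ_le) auto
qed

lemma mean_eq_suminf: "mean p = (\<Sum>k. ennreal (real k * p k))"
  unfolding mean_def by (simp add: nn_integral_count_space_nat)

lemma summable_mean:
  assumes "\<And>k. 0 \<le> p k" "mean p < \<infinity>"
  shows "summable (\<lambda>k. real k * p k)"
  using assms by (intro summable_suminf_not_top) (auto simp: mean_eq_suminf)

lemma mean_pos_imp_offspring:
  assumes "\<And>k. 0 \<le> p k" "0 < mean p"
  obtains k where "1 \<le> k" "0 < p k"
proof -
  have "\<exists>k\<ge>1. 0 < p k"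
  proof (rule ccontr)
    assume "\<not> (\<exists>k\<ge>1. 0 < p k)"
    then have "p k = 0" if "1 \<le> k" for k
      using that assms(1)[of k] by fastforce
    then have "real k * p k = 0" for k
      by (cases "k = 0") auto
    then have "mean p = (\<Sum>k. ennreal 0)"
      unfolding mean_eq_suminf by (simp only:)
    with assms(2) show False
      by simp
  qed
  then show ?thesis
    using that by blast
qed

lemma survival_pos_iff_nbrs:
  assumes "regular_env q"
  shows "0 < survival q s z \<longleftrightarrow> (\<exists>y\<in>nbrs z. 0 < survival q (Suc s) y)"
proof
  have q: "proper_env q" and p: "\<And>k. 0 \<le> q (s,z) k"
    and m: "0 < mean (q (s,z))" "mean (q (s,z)) < \<infinity>"
    using assms unfolding regular_env_def proper_env_def by auto
  assume pos: "0 < survival q s z"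
  show "\<exists>y\<in>nbrs z. 0 < survival q (Suc s) y"
  proof (rule ccontr)
    assume "\<not> (\<exists>y\<in>nbrs z. 0 < survival q (Suc s) y)"
    then have "survival q (Suc s) y = 0" if "y \<in> nbrs z" for y
      using that survival_nonneg[OF q] by (meson linorder_not_le order_antisym)
    then have "survival q s z \<le> 0"
      using survival_le_mean[OF q summable_mean[OF p m(2)]] by simp
    with pos show False
      by simp
  qed
next
  have q: "proper_env q" and p: "\<And>k. 0 \<le> q (s,z) k" and m: "0 < mean (q (s,z))"
    using assms unfolding regular_env_def proper_env_def by auto
  assume "\<exists>y\<in>nbrs z. 0 < survival q (Suc s) y"
  then obtain y where y: "y \<in> nbrs z" "0 < survival q (Suc s) y"
    by blast
  obtain k where k: "1 \<le> k" "0 < q (s,z) k"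
    using mean_pos_imp_offspring[OF p m] .
  have "0 < q (s,z) k * survival q (Suc s) y / real (card (nbrs z))"
    using k y card_nbrs_pos[of z] by simp
  also have "\<dots> \<le> survival q s z"
    using q y(1) k(1) by (rule survival_ge_offspring)
  finally show "0 < survival q s z" .
qed

fun reachable :: "nat \<Rightarrow> (int ^ ('d::finite)) set" where
  "reachable 0 = {0}"
| "reachable (Suc T) = (\<Union>y\<in>reachable T. nbrs y)"

lemma finite_reachable: "finite (reachable T)"
  by (induction T) (auto simp: finite_nbrs)

lemma survival_pos_iff_reachable:
  assumes "regular_env q"
  shows "0 < survival q 0 0 \<longleftrightarrow> (\<exists>y\<in>reachable T. 0 < survival q T y)"
proof (induction T)
  case (Suc T)
  show ?case
    unfolding Suc using survival_pos_iff_nbrs[OF assms, of T] by auto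
qed simp

locale iid_field =
  fixes \<mu> :: "'a measure" and Q :: "(nat \<times> 'i::countable \<Rightarrow> 'a) measure"
  assumes prob_space_\<mu>: "prob_space \<mu>"
    and Q_eq: "Q = (\<Pi>\<^sub>M i\<in>UNIV. \<mu>)"
begin

sublocale prob_space Q
  unfolding Q_eq using prob_space_\<mu> by (rule prob_space_PiM)

lemma measurable_coordinate: "(\<lambda>q. q i) \<in> measurable Q \<mu>"
  unfolding Q_eq by (rule measurable_component_singleton) simp

lemma distr_coordinate: "distr Q \<mu> (\<lambda>q. q i) = \<mu>"
  unfolding Q_eq by (rule distr_PiM_component) (auto intro: prob_space_\<mu>)

lemma nn_integral_coordinate:
  "f \<in> borel_measurable \<mu> \<Longrightarrow> (\<integral>\<^sup>+q. f (q i) \<partial>Q) = (\<integral>\<^sup>+p. f p \<partial>\<mu>)"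
  using nn_integral_distr[OF measurable_coordinate, of f i] by (simp add: distr_coordinate)

lemma AE_all_coordinates: "(AE p in \<mu>. P p) \<Longrightarrow> AE q in Q. \<forall>i. P (q i)"
  unfolding AE_all_countable Q_eq
  by (auto intro: AE_PiM_component[of UNIV "\<lambda>_. \<mu>"] prob_space_\<mu>)

definition coordinate_events :: "nat \<times> 'i \<Rightarrow> (nat \<times> 'i \<Rightarrow> 'a) set set" where
  "coordinate_events i = {(\<lambda>q. q i) -` B \<inter> space Q | B. B \<in> sets \<mu>}"

definition slice_events :: "nat \<Rightarrow> (nat \<times> 'i \<Rightarrow> 'a) set set" where
  "slice_events t = sigma_sets (space Q) (\<Union>i\<in>{t} \<times> UNIV. coordinate_events i)"

definition future :: "nat \<Rightarrow> (nat \<times> 'i \<Rightarrow> 'a) measure" where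
  "future n = sigma (space Q) (\<Union>(slice_events ` {n..}))"

lemma coordinate_events_subset: "coordinate_events i \<subseteq> Pow (space Q)"
  unfolding coordinate_events_def by auto

lemma slice_events_subset: "slice_events t \<subseteq> Pow (space Q)"
  unfolding slice_events_def
  using sigma_sets_into_sp[of "\<Union>i\<in>{t} \<times> UNIV. coordinate_events i" "space Q"] coordinate_events_subset
  by blast

lemma sigma_algebra_slice_events: "sigma_algebra (space Q) (slice_events t)"
  unfolding slice_events_def
  by (rule sigma_algebra_sigma_sets) (use coordinate_events_subset in auto)

lemma indep_coordinate_events: "indep_sets coordinate_events UNIV"
proof -
  have "indep_vars (\<lambda>_. \<mu>) (\<lambda>i q. q i) UNIV"
    using measurable_coordinate
    by (subst indep_vars_iff_distr_eq_PiM) (auto simp: restrict_UNIV distr_coordinate Q_eq[symmetric])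
  then show ?thesis
    unfolding indep_vars_def2 coordinate_events_def by simp
qed

lemma indep_slice_events: "indep_sets slice_events UNIV"
  unfolding slice_events_def
proof (rule indep_sets_collect_sigma)
  have "(\<Union>t. {t} \<times> UNIV) = (UNIV :: (nat \<times> 'i) set)"
    by auto
  then show "indep_sets coordinate_events (\<Union>t\<in>UNIV. {t} \<times> UNIV)"
    using indep_coordinate_events by simp
  show "Int_stable (coordinate_events i)" for i
  proof (rule Int_stableI)
    fix a b assume "a \<in> coordinate_events i" "b \<in> coordinate_events i"
    then obtain A B where "A \<in> sets \<mu>" "B \<in> sets \<mu>"
      "a = (\<lambda>q. q i) -` A \<inter> space Q" "b = (\<lambda>q. q i) -` B \<inter> space Q"
      unfolding coordinate_events_def by auto
    then show "a \<inter> b \<in> coordinate_events i"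
      unfolding coordinate_events_def by (intro CollectI exI[of _ "A \<inter> B"]) auto
  qed
  show "disjoint_family_on (\<lambda>t. {t} \<times> (UNIV :: 'i set)) UNIV"
    by (auto simp: disjoint_family_on_def)
qed

lemma space_future [simp]: "space (future n) = space Q"
  unfolding future_def by (rule space_measure_of_conv)

lemma sets_future: "sets (future n) = sigma_sets (space Q) (\<Union>(slice_events ` {n..}))"
  unfolding future_def
  using slice_events_subset by (intro sets_measure_of) blast

lemma sets_future_subset_events: "sets (future n) \<subseteq> events"
  unfolding sets_future
  using indep_slice_events by (intro sets.sigma_sets_subset) (auto simp: indep_sets_def)

lemma measurable_coordinate_future:
  assumes "n \<le> t"
  shows "(\<lambda>q. q (t,x)) \<in> measurable (future n) \<mu>"
proof (rule measurableI)
  show "q (t,x) \<in> space \<mu>" if "q \<in> space (future n)" for q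
    using measurable_space[OF measurable_coordinate] that by simp
  fix B assume "B \<in> sets \<mu>"
  then have "(\<lambda>q. q (t,x)) -` B \<inter> space Q \<in> slice_events t"
    unfolding slice_events_def coordinate_events_def by (intro sigma_sets.Basic) auto
  then show "(\<lambda>q. q (t,x)) -` B \<inter> space (future n) \<in> sets (future n)"
    using assms unfolding sets_future by (intro sigma_sets.Basic) auto
qed

lemma future_zero_one_law:
  assumes "\<And>n. X \<in> sets (future n)"
  shows "prob X = 0 \<or> prob X = 1"
  using sigma_algebra_slice_events indep_slice_events
proof (rule kolmogorov_0_1_law)
  show "X \<in> tail_events slice_events"
    using assms unfolding tail_events_def sets_future by blast
qed

end

lemma borel_measurable_mean: "mean \<in> borel_measurable (\<Pi>\<^sub>M k\<in>UNIV. (borel :: real measure))"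
proof -
  have "(\<lambda>p. \<Sum>k. ennreal (real k * p k)) \<in> borel_measurable (\<Pi>\<^sub>M k\<in>UNIV. (borel :: real measure))"
    by measurable
  then show ?thesis
    by (simp add: mean_eq_suminf[abs_def])
qed

locale iid_env = iid_field \<mu> Q
  for \<mu> :: "(nat \<Rightarrow> real) measure" and Q :: "('d::finite) env measure" +
  assumes sets_\<mu>: "sets \<mu> = sets (\<Pi>\<^sub>M k\<in>UNIV. (borel :: real measure))"
begin

lemma measurable_offspring_prob [measurable]: "(\<lambda>p. p k) \<in> borel_measurable \<mu>"
  by (subst measurable_cong_sets[OF sets_\<mu> refl]) simp

lemma measurable_mean [measurable]: "mean \<in> borel_measurable \<mu>"
  using borel_measurable_mean by (subst measurable_cong_sets[OF sets_\<mu> refl])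

lemma AE_regular_env:
  assumes "AE p in \<mu>. (\<forall>k. 0 \<le> p k) \<and> p sums 1"
    and "(\<integral>\<^sup>+ q. mean (q (0, 0)) + inverse (mean (q (0, 0))) \<partial>Q) < \<infinity>"
  shows "AE q in Q. regular_env q"
proof -
  have "(\<integral>\<^sup>+p. mean p + inverse (mean p) \<partial>\<mu>) \<noteq> \<infinity>"
    using assms(2) nn_integral_coordinate[of "\<lambda>p. mean p + inverse (mean p)" "(0,0)"] by simp
  then have "AE p in \<mu>. mean p + inverse (mean p) \<noteq> \<infinity>"
    by (intro nn_integral_PInf_AE) measurable
  then have "AE p in \<mu>. 0 < mean p \<and> mean p < \<infinity>"
  proof eventually_elim
    case (elim p)
    then have "mean p \<noteq> \<infinity>" "inverse (mean p) \<noteq> \<infinity>"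
      by auto
    then show ?case
      by (auto simp: less_top[symmetric] zero_less_iff_neq_zero)
  qed
  with assms(1) have "AE p in \<mu>. ((\<forall>k. 0 \<le> p k) \<and> p sums 1) \<and> 0 < mean p \<and> mean p < \<infinity>"
    by (rule AE_conjI)
  then have "AE q in Q. \<forall>i. ((\<forall>k. 0 \<le> q i k) \<and> q i sums 1) \<and> 0 < mean (q i) \<and> mean (q i) < \<infinity>"
    by (rule AE_all_coordinates)
  then show ?thesis
    by eventually_elim (auto simp: regular_env_def proper_env_def)
qed

lemma measurable_survival_future:
  assumes "n \<le> s"
  shows "(\<lambda>q. survival q s z) \<in> borel_measurable (future n)"
proof -
  have "(\<lambda>q. extinction_ennreal q s z t) \<in> borel_measurable (future n)" if "n \<le> s" for s z t
    using that
  proof (induction t arbitrary: s z)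
    case (Suc t)
    have [measurable]: "(\<lambda>q. extinction_ennreal q (Suc s) y t) \<in> borel_measurable (future n)" for y
      using Suc by simp
    have [measurable]: "(\<lambda>q. q (s,z) k) \<in> borel_measurable (future n)" for k
      using measurable_coordinate_future[OF Suc.prems] measurable_offspring_prob
      by (rule measurable_compose)
    show ?case
      by simp
  qed simp
  note this[OF assms, measurable]
  show ?thesis
    unfolding survival_def extinction_def by measurable
qed

lemma survives_infinitely_often_in_future:
  "{q \<in> space Q. \<forall>N. \<exists>T\<ge>N. \<exists>y\<in>reachable T. 0 < survival q T y} \<in> sets (future n)"
    (is "?X \<in> _")
proof -
  have [measurable]: "(\<lambda>q. survival q (T + n) y) \<in> borel_measurable (future n)" for T y
    by (rule measurable_survival_future) simp
  have "?X = {q \<in> space (future n). \<forall>N. \<exists>T. \<exists>y\<in>reachable (T + N + n). 0 < survival q (T + N + n) y}"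
    (is "_ = ?Y")
  proof (intro equalityI subsetI)
    fix q assume X: "q \<in> ?X"
    have "\<exists>T. \<exists>y\<in>reachable (T + N + n). 0 < survival q (T + N + n) y" for N
    proof -
      obtain T where "N + n \<le> T" "\<exists>y\<in>reachable T. 0 < survival q T y"
        using X by blast
      then show ?thesis
        by (intro exI[of _ "T - (N + n)"]) simp
    qed
    with X show "q \<in> ?Y"
      by simp
  next
    fix q assume Y: "q \<in> ?Y"
    have "\<exists>T\<ge>N. \<exists>y\<in>reachable T. 0 < survival q T y" for N
    proof -
      obtain T where "\<exists>y\<in>reachable (T + N + n). 0 < survival q (T + N + n) y"
        using Y by blast
      then show ?thesis
        by (intro exI[of _ "T + N + n"]) simp
    qed
    with Y show "q \<in> ?X"
      by simp
  qed
  also have "\<dots> \<in> sets (future n)"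
    using finite_reachable by measurable
  finally show ?thesis .
qed

end

theorem proposition2p2p1:
  fixes \<mu> :: "(nat \<Rightarrow> real) measure"
    and Q :: "('d::finite) env measure"
  assumes "prob_space \<mu>"
    and "sets \<mu> = sets (\<Pi>\<^sub>M k\<in>(UNIV::nat set). (borel :: real measure))"
    and "AE p in \<mu>. (\<forall>k. 0 \<le> p k) \<and> p sums 1"
    and "Q = (\<Pi>\<^sub>M z\<in>(UNIV :: (nat \<times> (int ^ 'd)) set). \<mu>)"
    and "(\<integral>\<^sup>+ q. mean (q (0, 0)) + inverse (mean (q (0, 0))) \<partial>Q) < \<infinity>"
  shows "(AE q in Q. surv_prob q > 0) \<or> (AE q in Q. surv_prob q = 0)"
proof -
  interpret iid_env \<mu> Q
    using assms(1,2,4) by (simp add: iid_env_def iid_field_def iid_env_axioms_def)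
  define X where "X = {q \<in> space Q. \<forall>N. \<exists>T\<ge>N. \<exists>y\<in>reachable T. 0 < survival q T y}"
  have X: "X \<in> sets (future n)" for n
    unfolding X_def by (rule survives_infinitely_often_in_future)
  have regular: "AE q in Q. regular_env q"
    using assms(3,5) by (rule AE_regular_env)
  then have X_iff: "AE q in Q. (q \<in> X \<longleftrightarrow> 0 < surv_prob q) \<and> 0 \<le> surv_prob q"
    using AE_space
    by eventually_elim (auto simp: X_def regular_env_def surv_prob_eq_survival survival_nonneg
        survival_pos_iff_reachable[symmetric])
  from X have "prob X = 0 \<or> prob X = 1"
    by (rule future_zero_one_law)
  then show ?thesis
  proof
    assume "prob X = 0"
    then have "AE q in Q. q \<notin> X"
      using X[of 0] sets_future_subset_events prob_eq_0 by blast
    with X_iff have "AE q in Q. surv_prob q = 0"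
      by eventually_elim auto
    then show ?thesis ..
  next
    assume "prob X = 1"
    then have "AE q in Q. q \<in> X"
      by (rule AE_prob_1)
    with X_iff have "AE q in Q. 0 < surv_prob q"
      by eventually_elim auto
    then show ?thesis ..
  qed
qed

end
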